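(* For every integer $n\geq 4$ and every $p>1$, $$\lambda_{1,p}(P_n)>\lambda_{1,p}(P_{n+1})>\lambda_{1,p}(T_{n,3}).$$
   Context: $P_n$ denotes the path graph on $n$ vertices (its two end vertices are its boundary). For $n>i\ge 3$, the tadpole graph $T_{n,i}$ is the graph on vertices $t_1,\dots,t_n$ with edges $t_n\sim t_{n-1}\sim\cdots\sim t_i\sim t_{i-1}\sim\cdots\sim t_2\sim t_1\sim t_i$ (a cycle of length $i$ with a path attached at $t_i$). For a finite connected graph $G$, $B(G)=\{x\in V(G):\deg x=1\}$, $C_B(G)=\{f\in\mathbb{R}^{V(G)}: f|_{B(G)}\equiv0\}$, and $$\lambda_{1,p}(G)=\min_{f\in C_B(G)\setminus\{0\}}\frac{\sum_{\{x,y\}\in E(G)}|f(x)-f(y)|^p}{\sum_{x\in V(G)}|f(x)|^p}.$$ *)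

theory Defs
  imports Complex_Main
begin

text \<open>A finite graph is given by a vertex set V and a set E of edges, each undirected
edge {x,y} being listed exactly once as an ordered pair (x,y).\<close>

definition graph_deg :: "(nat \<times> nat) set \<Rightarrow> nat \<Rightarrow> nat" where
  "graph_deg E x = card {e \<in> E. fst e = x \<or> snd e = x}"

definition graph_boundary :: "nat set \<Rightarrow> (nat \<times> nat) set \<Rightarrow> nat set" where
  "graph_boundary V E = {x \<in> V. graph_deg E x = 1}"

text \<open>Rayleigh quotient of f and the first Dirichlet p-Laplacian eigenvalue
(the minimum is attained, so it coincides with the infimum).\<close>

definition rayleigh_p :: "nat set \<Rightarrow> (nat \<times> nat) set \<Rightarrow> real \<Rightarrow> (nat \<Rightarrow> real) \<Rightarrow> real" where
  "rayleigh_p V E p f =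
     (\<Sum>e\<in>E. \<bar>f (fst e) - f (snd e)\<bar> powr p) / (\<Sum>x\<in>V. \<bar>f x\<bar> powr p)"

definition lambda1p :: "nat set \<Rightarrow> (nat \<times> nat) set \<Rightarrow> real \<Rightarrow> real" where
  "lambda1p V E p = Inf {rayleigh_p V E p f | f.
      (\<forall>x\<in>graph_boundary V E. f x = 0) \<and> (\<exists>x\<in>V. f x \<noteq> 0)}"

definition path_edges :: "nat \<Rightarrow> (nat \<times> nat) set" where
  "path_edges n = {(k, k + 1) | k. 1 \<le> k \<and> k < n}"

definition lambda_path :: "real \<Rightarrow> nat \<Rightarrow> real" where
  "lambda_path p n = lambda1p {1..n} (path_edges n) p"

definition tadpole_edges :: "nat \<Rightarrow> nat \<Rightarrow> (nat \<times> nat) set" where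
  "tadpole_edges n i = path_edges n \<union> {(1, i)}"

definition lambda_tadpole :: "real \<Rightarrow> nat \<Rightarrow> nat \<Rightarrow> real" where
  "lambda_tadpole p n i = lambda1p {1..n} (tadpole_edges n i) p"

end

theory Submission
  imports Defs "HOL-Analysis.Analysis"
begin

text \<open>The minimum defining \<open>\<lambda>\<^sub>1\<^sub>,\<^sub>p\<close> is attained at a nonnegative function, by
  compactness after normalising \<open>max f = 1\<close>. If \<open>f\<close> is a minimiser on \<open>P\<^sub>n\<close>, duplicating a
  vertex where \<open>f\<close> does not vanish gives a test function on \<open>P\<^sub>n\<^sub>+\<^sub>1\<close> with the same energy and
  strictly larger mass.

  For the second inequality, cut a minimiser \<open>f\<close> of \<open>P\<^sub>n\<^sub>+\<^sub>1\<close> into two test functions on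
  \<open>T\<^sub>n\<^sub>,\<^sub>3\<close> whose energies add up to at most that of \<open>f\<close> and whose masses add up to at least
  that of \<open>f\<close>, one inequality being strict; then one of the two has a smaller Rayleigh quotient
  than \<open>f\<close>. For \<open>n \<ge> 5\<close> this needs \<open>f 2 \<noteq> 0\<close>, which holds because otherwise \<open>f\<close> shifted by
  one vertex would contradict the first inequality. For \<open>n = 4\<close> the cut depends on which of
  \<open>f 2, f 3, f 4\<close> is largest and uses \<open>s\<^sup>p + t\<^sup>p \<le> (s + t)\<^sup>p\<close> for \<open>p \<ge> 1\<close>.\<close>

definition dirichlet_admissible :: "nat set \<Rightarrow> (nat \<times> nat) set \<Rightarrow> (nat \<Rightarrow> real) \<Rightarrow> bool" where
  "dirichlet_admissible V E f \<longleftrightarrow> (\<forall>x\<in>graph_boundary V E. f x = 0) \<and> (\<exists>x\<in>V. f x \<noteq> 0)"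

lemma rayleigh_p_nonneg: "0 \<le> rayleigh_p V E p f"
  unfolding rayleigh_p_def by (intro divide_nonneg_nonneg sum_nonneg) auto

lemma lambda1p_le_rayleigh_p:
  assumes "dirichlet_admissible V E f"
  shows "lambda1p V E p \<le> rayleigh_p V E p f"
  unfolding lambda1p_def
  by (rule cInf_lower)
    (use assms rayleigh_p_nonneg in \<open>auto simp: dirichlet_admissible_def intro!: bdd_belowI[where m=0]\<close>)

lemma lambda1p_eq_rayleigh_p:
  assumes "dirichlet_admissible V E f"
    and "\<And>g. dirichlet_admissible V E g \<Longrightarrow> rayleigh_p V E p f \<le> rayleigh_p V E p g"
  shows "lambda1p V E p = rayleigh_p V E p f"
  unfolding lambda1p_def
  by (rule cInf_eq_minimum) (use assms in \<open>auto simp: dirichlet_admissible_def\<close>)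

lemma sum_abs_powr_pos:
  fixes f :: "'a \<Rightarrow> real"
  assumes "finite V" "x \<in> V" "f x \<noteq> 0"
  shows "0 < (\<Sum>y\<in>V. \<bar>f y\<bar> powr p)"
proof -
  have "\<bar>f x\<bar> powr p \<le> (\<Sum>y\<in>V. \<bar>f y\<bar> powr p)"
    using assms by (intro member_le_sum) auto
  moreover have "0 < \<bar>f x\<bar> powr p"
    using assms by simp
  ultimately show ?thesis by linarith
qed

lemma rayleigh_p_cong:
  assumes "E \<subseteq> V \<times> V" "\<And>x. x \<in> V \<Longrightarrow> f x = g x"
  shows "rayleigh_p V E p f = rayleigh_p V E p g"
proof -
  have "(\<Sum>e\<in>E. \<bar>f (fst e) - f (snd e)\<bar> powr p) = (\<Sum>e\<in>E. \<bar>g (fst e) - g (snd e)\<bar> powr p)"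
    using assms by (intro sum.cong) auto
  moreover have "(\<Sum>x\<in>V. \<bar>f x\<bar> powr p) = (\<Sum>x\<in>V. \<bar>g x\<bar> powr p)"
    using assms by (intro sum.cong) auto
  ultimately show ?thesis
    unfolding rayleigh_p_def by simp
qed

lemma rayleigh_p_scale:
  assumes "0 < c"
  shows "rayleigh_p V E p (\<lambda>x. c * f x) = rayleigh_p V E p f"
proof -
  have "(\<Sum>e\<in>E. \<bar>c * f (fst e) - c * f (snd e)\<bar> powr p)
      = c powr p * (\<Sum>e\<in>E. \<bar>f (fst e) - f (snd e)\<bar> powr p)"
    unfolding sum_distrib_left right_diff_distrib[symmetric]
    using assms by (simp add: abs_mult powr_mult)
  moreover have "(\<Sum>x\<in>V. \<bar>c * f x\<bar> powr p) = c powr p * (\<Sum>x\<in>V. \<bar>f x\<bar> powr p)"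
    unfolding sum_distrib_left using assms by (simp add: abs_mult powr_mult)
  ultimately show ?thesis
    unfolding rayleigh_p_def using assms by simp
qed

lemma rayleigh_p_abs_le:
  assumes "0 \<le> p"
  shows "rayleigh_p V E p (\<lambda>x. \<bar>f x\<bar>) \<le> rayleigh_p V E p f"
  unfolding rayleigh_p_def abs_abs
  by (intro divide_right_mono sum_mono powr_mono2)
    (use assms in \<open>auto intro: sum_nonneg abs_triangle_ineq3\<close>)

lemma continuous_on_rayleigh_p:
  assumes "finite V" "0 < p" "\<And>f. f \<in> S \<Longrightarrow> \<exists>x\<in>V. f x \<noteq> 0"
  shows "continuous_on S (rayleigh_p V E p)"
proof -
  have coordinate: "continuous_on S (\<lambda>f. f i)" for i :: nat
    by (rule continuous_on_subset[OF continuous_on_product_coordinates]) simp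
  have numerator: "continuous_on S (\<lambda>f. \<Sum>e\<in>E. \<bar>f (fst e) - f (snd e)\<bar> powr p)"
    using assms(2) by (intro continuous_on_sum continuous_on_powr' continuous_on_rabs
        continuous_on_diff coordinate continuous_on_const) auto
  have denominator: "continuous_on S (\<lambda>f. \<Sum>x\<in>V. \<bar>f x\<bar> powr p)"
    using assms(2) by (intro continuous_on_sum continuous_on_powr' continuous_on_rabs
        coordinate continuous_on_const) auto
  have "\<forall>f\<in>S. (\<Sum>x\<in>V. \<bar>f x\<bar> powr p) \<noteq> 0"
    using assms(3) sum_abs_powr_pos[OF assms(1)] by (metis less_irrefl)
  with numerator denominator
  have "continuous_on S (\<lambda>f. (\<Sum>e\<in>E. \<bar>f (fst e) - f (snd e)\<bar> powr p) / (\<Sum>x\<in>V. \<bar>f x\<bar> powr p))"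
    by (rule continuous_on_divide)
  then show ?thesis
    unfolding rayleigh_p_def[abs_def] .
qed

definition normalized_tests :: "nat set \<Rightarrow> (nat \<times> nat) set \<Rightarrow> (nat \<Rightarrow> real) set" where
  "normalized_tests V E =
     {f. (\<forall>x. f x \<in> {0..1}) \<and> (\<forall>x\<in>graph_boundary V E. f x = 0) \<and> (\<exists>x\<in>V. f x = 1)}"

lemma compact_normalized_tests:
  assumes "finite V"
  shows "compact (normalized_tests V E)"
proof -
  have "compactin (product_topology (\<lambda>_. euclidean) UNIV) (Pi\<^sub>E UNIV (\<lambda>_::nat. {0..1::real}))"
    by (subst compactin_PiE) auto
  then have "compact {f :: nat \<Rightarrow> real. \<forall>x. f x \<in> {0..1}}"
    by (simp add: euclidean_product_topology PiE_UNIV_domain Pi_def)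
  moreover have "closed {f :: nat \<Rightarrow> real. \<forall>x\<in>graph_boundary V E. f x = 0}"
    by (simp add: Collect_ball_eq closed_INT closed_Collect_eq)
  moreover have "closed {f :: nat \<Rightarrow> real. \<exists>x\<in>V. f x = 1}"
    using assms by (simp add: Collect_bex_eq closed_UN closed_Collect_eq)
  ultimately show ?thesis
    unfolding normalized_tests_def Collect_conj_eq by (blast intro: compact_Int_closed closed_Int)
qed

lemma rayleigh_p_normalize:
  assumes "finite V" "E \<subseteq> V \<times> V" "0 \<le> p" "dirichlet_admissible V E g"
  shows "\<exists>h\<in>normalized_tests V E. rayleigh_p V E p h \<le> rayleigh_p V E p g"
proof -
  define M where "M = Max ((\<lambda>x. \<bar>g x\<bar>) ` V)"
  obtain x0 where x0: "x0 \<in> V" "g x0 \<noteq> 0"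
    using assms(4) unfolding dirichlet_admissible_def by blast
  have le_M: "\<bar>g x\<bar> \<le> M" if "x \<in> V" for x
    unfolding M_def using assms(1) that by simp
  obtain x1 where x1: "x1 \<in> V" "\<bar>g x1\<bar> = M"
    unfolding M_def using Max_in[of "(\<lambda>x. \<bar>g x\<bar>) ` V"] assms(1) x0(1) by fastforce
  have "0 < M"
    using le_M[OF x0(1)] x0(2) by linarith
  define h where "h x = (if x \<in> V then \<bar>g x\<bar> / M else 0)" for x
  have "h \<in> normalized_tests V E"
    using assms(4) le_M \<open>0 < M\<close> x1
    unfolding normalized_tests_def dirichlet_admissible_def h_def by auto
  moreover have "rayleigh_p V E p h = rayleigh_p V E p (\<lambda>x. \<bar>g x\<bar>)"
  proof -
    have "rayleigh_p V E p h = rayleigh_p V E p (\<lambda>x. inverse M * \<bar>g x\<bar>)"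
      by (rule rayleigh_p_cong[OF assms(2)]) (simp add: h_def field_simps)
    also have "\<dots> = rayleigh_p V E p (\<lambda>x. \<bar>g x\<bar>)"
      by (rule rayleigh_p_scale) (use \<open>0 < M\<close> in simp)
    finally show ?thesis .
  qed
  moreover have "rayleigh_p V E p (\<lambda>x. \<bar>g x\<bar>) \<le> rayleigh_p V E p g"
    by (rule rayleigh_p_abs_le) (use assms(3) in simp)
  ultimately show ?thesis by (intro bexI[of _ h]) auto
qed

lemma lambda1p_attained:
  assumes "finite V" "E \<subseteq> V \<times> V" "0 < p" "\<exists>g. dirichlet_admissible V E g"
  shows "\<exists>f. (\<forall>x. 0 \<le> f x) \<and> dirichlet_admissible V E f \<and> lambda1p V E p = rayleigh_p V E p f"
proof -
  let ?K = "normalized_tests V E"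
  have normalized: "\<forall>x. 0 \<le> f x" "dirichlet_admissible V E f" if "f \<in> ?K" for f
    using that unfolding normalized_tests_def dirichlet_admissible_def by force+
  have normalize: "\<exists>h\<in>?K. rayleigh_p V E p h \<le> rayleigh_p V E p g"
    if "dirichlet_admissible V E g" for g
    using rayleigh_p_normalize[OF assms(1,2) _ that] assms(3) by simp
  have "?K \<noteq> {}"
    using assms(4) normalize by blast
  moreover have "continuous_on ?K (rayleigh_p V E p)"
    by (rule continuous_on_rayleigh_p[OF assms(1,3)]) (force simp: normalized_tests_def)
  ultimately obtain f where f: "f \<in> ?K" "\<forall>h\<in>?K. rayleigh_p V E p f \<le> rayleigh_p V E p h"
    using continuous_attains_inf[OF compact_normalized_tests[OF assms(1)]] by blast
  have "lambda1p V E p = rayleigh_p V E p f"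
  proof (rule lambda1p_eq_rayleigh_p)
    show "dirichlet_admissible V E f"
      using normalized f(1) by blast
    show "rayleigh_p V E p f \<le> rayleigh_p V E p g" if "dirichlet_admissible V E g" for g
      using normalize[OF that] f(2) by (meson order_trans)
  qed
  then show ?thesis
    using normalized f(1) by blast
qed

definition path_energy :: "real \<Rightarrow> nat \<Rightarrow> (nat \<Rightarrow> real) \<Rightarrow> real" where
  "path_energy p n f = (\<Sum>k\<in>{1..<n}. \<bar>f k - f (Suc k)\<bar> powr p)"

definition path_mass :: "real \<Rightarrow> nat \<Rightarrow> (nat \<Rightarrow> real) \<Rightarrow> real" where
  "path_mass p n f = (\<Sum>k\<in>{1..n}. \<bar>f k\<bar> powr p)"

definition tadpole_energy :: "real \<Rightarrow> nat \<Rightarrow> (nat \<Rightarrow> real) \<Rightarrow> real" where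
  "tadpole_energy p n f = path_energy p n f + \<bar>f 1 - f 3\<bar> powr p"

lemma path_energy_nonneg: "0 \<le> path_energy p n f"
  unfolding path_energy_def by (intro sum_nonneg) simp

lemma tadpole_energy_nonneg: "0 \<le> tadpole_energy p n f"
  unfolding tadpole_energy_def using path_energy_nonneg[of p n f] by simp

lemma path_mass_pos:
  assumes "\<exists>x\<in>{1..n}. f x \<noteq> 0"
  shows "0 < path_mass p n f"
  using assms sum_abs_powr_pos[of "{1..n}" _ f p] unfolding path_mass_def by blast

lemma path_energy_pos:
  assumes "f 1 = 0" "\<exists>x\<in>{1..n}. f x \<noteq> 0"
  shows "0 < path_energy p n f"
proof (rule ccontr)
  assume "\<not> 0 < path_energy p n f"
  then have "path_energy p n f = 0"
    using path_energy_nonneg[of p n f] by linarith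
  then have step: "f (Suc k) = f k" if "1 \<le> k" "k < n" for k
    using that unfolding path_energy_def by (subst (asm) sum_nonneg_eq_0_iff) auto
  have "f k = 0" if "1 \<le> k" "k \<le> n" for k
    using that
  proof (induction k)
    case (Suc k)
    then show ?case
      using step[of k] assms(1) by (cases "k = 0") auto
  qed simp
  then show False
    using assms(2) by auto
qed

lemma path_energy_cong:
  "(\<And>k. 1 \<le> k \<Longrightarrow> k \<le> n \<Longrightarrow> f k = g k) \<Longrightarrow> path_energy p n f = path_energy p n g"
  unfolding path_energy_def by (intro sum.cong) auto

lemma path_mass_cong:
  "(\<And>k. 1 \<le> k \<Longrightarrow> k \<le> n \<Longrightarrow> f k = g k) \<Longrightarrow> path_mass p n f = path_mass p n g"
  unfolding path_mass_def by (intro sum.cong) auto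

lemma path_energy_Suc:
  "1 \<le> n \<Longrightarrow> path_energy p (Suc n) f = path_energy p n f + \<bar>f n - f (Suc n)\<bar> powr p"
  unfolding path_energy_def by simp

lemma path_mass_Suc: "path_mass p (Suc n) f = path_mass p n f + \<bar>f (Suc n)\<bar> powr p"
  unfolding path_mass_def by simp

lemma path_energy_add:
  assumes "1 \<le> n"
  shows "path_energy p (m + n) f = path_energy p (Suc m) f + path_energy p n (\<lambda>k. f (k + m))"
proof -
  have "path_energy p (m + n) f
      = path_energy p (Suc m) f + (\<Sum>k\<in>{Suc m..<m + n}. \<bar>f k - f (Suc k)\<bar> powr p)"
    unfolding path_energy_def using assms by (intro sum.atLeastLessThan_concat[symmetric]) auto
  also have "(\<Sum>k\<in>{Suc m..<m + n}. \<bar>f k - f (Suc k)\<bar> powr p) = path_energy p n (\<lambda>k. f (k + m))"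
    unfolding path_energy_def using sum.shift_bounds_nat_ivl[of _ 1 m n] by (simp add: add.commute)
  finally show ?thesis .
qed

lemma path_mass_add: "path_mass p (m + n) f = path_mass p m f + path_mass p n (\<lambda>k. f (k + m))"
proof -
  have "path_mass p (m + n) f = path_mass p m f + (\<Sum>k\<in>{Suc m..m + n}. \<bar>f k\<bar> powr p)"
    unfolding path_mass_def using sum.ub_add_nat[of 1 m _ n] by simp
  also have "(\<Sum>k\<in>{Suc m..m + n}. \<bar>f k\<bar> powr p) = path_mass p n (\<lambda>k. f (k + m))"
    unfolding path_mass_def using sum.shift_bounds_cl_nat_ivl[of _ 1 m n] by (simp add: add.commute)
  finally show ?thesis .
qed

definition duplicate_vertex :: "nat \<Rightarrow> (nat \<Rightarrow> real) \<Rightarrow> nat \<Rightarrow> real" where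
  "duplicate_vertex m f k = (if k \<le> m then f k else f (k - 1))"

lemma path_energy_duplicate_vertex:
  assumes "1 \<le> m" "m \<le> n"
  shows "path_energy p (Suc n) (duplicate_vertex m f) = path_energy p n f"
proof -
  let ?g = "duplicate_vertex m f"
  have "path_energy p (Suc n) ?g = path_energy p (Suc m) ?g + path_energy p (n - m + 1) (\<lambda>k. ?g (k + m))"
    using path_energy_add[of "n - m + 1" p m ?g] assms by simp
  also have "path_energy p (Suc m) ?g = path_energy p m f"
  proof -
    have "path_energy p m ?g = path_energy p m f"
      by (rule path_energy_cong) (simp add: duplicate_vertex_def)
    then show ?thesis
      using path_energy_Suc[OF assms(1), of p ?g] by (simp add: duplicate_vertex_def)
  qed
  also have "path_energy p (n - m + 1) (\<lambda>k. ?g (k + m)) = path_energy p (n - m + 1) (\<lambda>k. f (k + (m - 1)))"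
    by (rule path_energy_cong) (use assms in \<open>auto simp: duplicate_vertex_def\<close>)
  also have "path_energy p m f + path_energy p (n - m + 1) (\<lambda>k. f (k + (m - 1))) = path_energy p n f"
    using path_energy_add[of "n - m + 1" p "m - 1" f] assms by simp
  finally show ?thesis .
qed

lemma path_mass_duplicate_vertex:
  assumes "1 \<le> m" "m \<le> n"
  shows "path_mass p (Suc n) (duplicate_vertex m f) = path_mass p n f + \<bar>f m\<bar> powr p"
proof -
  let ?g = "duplicate_vertex m f"
  have "path_mass p (Suc n) ?g = path_mass p m ?g + path_mass p (Suc n - m) (\<lambda>k. ?g (k + m))"
    using path_mass_add[of p m "Suc n - m" ?g] assms by simp
  also have "path_mass p m ?g = path_mass p m f"
    by (rule path_mass_cong) (simp add: duplicate_vertex_def)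
  also have "path_mass p (Suc n - m) (\<lambda>k. ?g (k + m)) = path_mass p (Suc n - m) (\<lambda>k. f (k + (m - 1)))"
    by (rule path_mass_cong) (use assms in \<open>auto simp: duplicate_vertex_def\<close>)
  also have "path_mass p m f + path_mass p (Suc n - m) (\<lambda>k. f (k + (m - 1))) = path_mass p n f + \<bar>f m\<bar> powr p"
    using path_mass_Suc[of p "m - 1" f] path_mass_add[of p "m - 1" "Suc n - m" f] assms by simp
  finally show ?thesis .
qed

lemma path_edges_eq: "path_edges n = (\<lambda>k. (k, Suc k)) ` {1..<n}"
  unfolding path_edges_def by auto

lemma finite_path_edges: "finite (path_edges n)"
  unfolding path_edges_eq by simp

lemma sum_path_edges:
  "(\<Sum>e\<in>path_edges n. \<bar>f (fst e) - f (snd e)\<bar> powr p) = path_energy p n f"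
  unfolding path_edges_eq path_energy_def by (subst sum.reindex) (auto simp: inj_on_def)

lemma rayleigh_p_path: "rayleigh_p {1..n} (path_edges n) p f = path_energy p n f / path_mass p n f"
  unfolding rayleigh_p_def sum_path_edges path_mass_def ..

lemma rayleigh_p_tadpole:
  "rayleigh_p {1..n} (tadpole_edges n 3) p f = tadpole_energy p n f / path_mass p n f"
proof -
  have "(1, 3) \<notin> path_edges n"
    unfolding path_edges_def by auto
  then show ?thesis
    unfolding rayleigh_p_def tadpole_edges_def tadpole_energy_def path_mass_def
    using finite_path_edges by (simp add: sum_path_edges)
qed

lemma two_le_graph_deg:
  assumes "finite E" "d \<in> E" "e \<in> E" "d \<noteq> e"
    and "fst d = x \<or> snd d = x" "fst e = x \<or> snd e = x"
  shows "2 \<le> graph_deg E x"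
proof -
  have "card {d, e} \<le> graph_deg E x"
    unfolding graph_deg_def using assms by (intro card_mono) auto
  then show ?thesis
    using assms(4) by simp
qed

lemma graph_boundary_path:
  assumes "2 \<le> n"
  shows "graph_boundary {1..n} (path_edges n) = {1, n}"
proof -
  have "{e \<in> path_edges n. fst e = 1 \<or> snd e = 1} = {(1, 2)}"
    "{e \<in> path_edges n. fst e = n \<or> snd e = n} = {(n - 1, n)}"
    using assms unfolding path_edges_def by auto
  then have ends: "graph_deg (path_edges n) 1 = 1" "graph_deg (path_edges n) n = 1"
    unfolding graph_deg_def by simp_all
  have inner: "2 \<le> graph_deg (path_edges n) x" if "1 < x" "x < n" for x
    using that by (intro two_le_graph_deg[of _ "(x - 1, x)" "(x, Suc x)"] finite_path_edges)
      (auto simp: path_edges_def)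
  show ?thesis
  proof (intro set_eqI iffI)
    fix x
    assume "x \<in> graph_boundary {1..n} (path_edges n)"
    then have "1 \<le> x" "x \<le> n" "graph_deg (path_edges n) x = 1"
      unfolding graph_boundary_def by auto
    then show "x \<in> {1, n}"
      using inner[of x] by (cases "x = 1 \<or> x = n") auto
  next
    fix x
    assume "x \<in> {1, n}"
    then show "x \<in> graph_boundary {1..n} (path_edges n)"
      using assms ends unfolding graph_boundary_def by auto
  qed
qed

lemma graph_boundary_tadpole: "graph_boundary {1..n} (tadpole_edges n 3) \<subseteq> {n}"
proof
  fix x
  assume x: "x \<in> graph_boundary {1..n} (tadpole_edges n 3)"
  have "2 \<le> graph_deg (tadpole_edges n 3) x" if "1 \<le> x" "x < n"
  proof (rule two_le_graph_deg[of _ "if x = 1 then (1, 3) else (x - 1, x)" "(x, Suc x)"])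
    show "finite (tadpole_edges n 3)"
      unfolding tadpole_edges_def using finite_path_edges by simp
  qed (use that in \<open>auto simp: tadpole_edges_def path_edges_def\<close>)
  moreover have "1 \<le> x" "x \<le> n" "graph_deg (tadpole_edges n 3) x = 1"
    using x unfolding graph_boundary_def by auto
  ultimately show "x \<in> {n}"
    by (cases "x < n") auto
qed

lemma lambda_path_le:
  assumes "2 \<le> n" "f 1 = 0" "f n = 0" "\<exists>x\<in>{1..n}. f x \<noteq> 0"
  shows "lambda_path p n \<le> path_energy p n f / path_mass p n f"
proof -
  have "dirichlet_admissible {1..n} (path_edges n) f"
    using assms(2-4) unfolding dirichlet_admissible_def graph_boundary_path[OF assms(1)] by simp
  then show ?thesis
    unfolding lambda_path_def rayleigh_p_path[symmetric] by (rule lambda1p_le_rayleigh_p)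
qed

lemma lambda_tadpole_le:
  assumes "f n = 0" "\<exists>x\<in>{1..n}. f x \<noteq> 0"
  shows "lambda_tadpole p n 3 \<le> tadpole_energy p n f / path_mass p n f"
  unfolding lambda_tadpole_def rayleigh_p_tadpole[symmetric]
  by (rule lambda1p_le_rayleigh_p) (use assms graph_boundary_tadpole in \<open>auto simp: dirichlet_admissible_def\<close>)

lemma lambda_path_attained:
  assumes "3 \<le> n" "0 < p"
  obtains f where "\<forall>x. 0 \<le> f x" "f 1 = 0" "f n = 0" "\<exists>x\<in>{1..n}. f x \<noteq> 0"
    "lambda_path p n = path_energy p n f / path_mass p n f"
proof -
  have boundary: "graph_boundary {1..n} (path_edges n) = {1, n}"
    using assms(1) by (intro graph_boundary_path) simp
  have admissible: "dirichlet_admissible {1..n} (path_edges n) f \<longleftrightarrow>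
      f 1 = 0 \<and> f n = 0 \<and> (\<exists>x\<in>{1..n}. f x \<noteq> 0)" for f
    unfolding dirichlet_admissible_def boundary by simp
  have "path_edges n \<subseteq> {1..n} \<times> {1..n}"
    unfolding path_edges_def by auto
  moreover have "\<exists>g. dirichlet_admissible {1..n} (path_edges n) g"
    using assms(1) admissible[of "\<lambda>k. of_bool (k = 2)"] by auto
  ultimately obtain f where "\<forall>x. 0 \<le> f x" "dirichlet_admissible {1..n} (path_edges n) f"
    "lambda_path p n = rayleigh_p {1..n} (path_edges n) p f"
    using lambda1p_attained[of "{1..n}" "path_edges n" p] assms(2) unfolding lambda_path_def by auto
  then show ?thesis
    using that unfolding admissible rayleigh_p_path by blast
qed

theorem lambda_path_Suc_less:
  assumes "3 \<le> n" "0 < p"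
  shows "lambda_path p (Suc n) < lambda_path p n"
proof -
  obtain f where "\<forall>x. 0 \<le> f x" and f: "f 1 = 0" "f n = 0" "\<exists>x\<in>{1..n}. f x \<noteq> 0"
    "lambda_path p n = path_energy p n f / path_mass p n f"
    by (rule lambda_path_attained[OF assms])
  obtain m where m: "1 \<le> m" "m \<le> n" "f m \<noteq> 0"
    using f(3) by auto
  let ?g = "duplicate_vertex m f"
  have "?g 1 = 0" "?g (Suc n) = 0" "?g m \<noteq> 0"
    using f(1,2) m by (simp_all add: duplicate_vertex_def)
  then have "lambda_path p (Suc n) \<le> path_energy p (Suc n) ?g / path_mass p (Suc n) ?g"
    using assms(1) m by (intro lambda_path_le) auto
  also have "\<dots> = path_energy p n f / (path_mass p n f + \<bar>f m\<bar> powr p)"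
    using m by (simp add: path_energy_duplicate_vertex path_mass_duplicate_vertex)
  also have "\<dots> < path_energy p n f / path_mass p n f"
  proof -
    have "0 < path_energy p n f" "0 < path_mass p n f" "0 < \<bar>f m\<bar> powr p"
      using path_energy_pos[OF f(1,3)] path_mass_pos[OF f(3)] m(3) by simp_all
    then show ?thesis
      by (intro divide_strict_left_mono mult_pos_pos add_pos_pos) simp_all
  qed
  finally show ?thesis
    using f(4) by simp
qed

lemma lambda_path_minimizer_nonzero_2:
  assumes "3 \<le> n" "0 < p" "f 1 = 0" "f (Suc n) = 0" "\<exists>x\<in>{1..Suc n}. f x \<noteq> 0"
    and "lambda_path p (Suc n) = path_energy p (Suc n) f / path_mass p (Suc n) f"
  shows "f 2 \<noteq> 0"
proof
  assume "f 2 = 0"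
  let ?g = "\<lambda>k. f (k + 1)"
  have "path_energy p (Suc n) f = path_energy p n ?g"
    using path_energy_add[of n p 1 f] assms(1,3) \<open>f 2 = 0\<close> by (simp add: path_energy_def numeral_2_eq_2)
  moreover have "path_mass p (Suc n) f = path_mass p n ?g"
    using path_mass_add[of p 1 n f] assms(3) by (simp add: path_mass_def)
  moreover have "lambda_path p n \<le> path_energy p n ?g / path_mass p n ?g"
  proof (rule lambda_path_le)
    obtain x where "x \<in> {1..Suc n}" "f x \<noteq> 0"
      using assms(5) by blast
    moreover have "x \<noteq> 1"
      using assms(3) \<open>f x \<noteq> 0\<close> by auto
    ultimately show "\<exists>x\<in>{1..n}. ?g x \<noteq> 0"
      by (intro bexI[of _ "x - 1"]) auto
  qed (use assms \<open>f 2 = 0\<close> in \<open>auto simp: numeral_2_eq_2\<close>)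
  ultimately have "lambda_path p n \<le> lambda_path p (Suc n)"
    using assms(6) by simp
  with lambda_path_Suc_less[OF assms(1,2)] show False
    by simp
qed

lemma lambda_tadpole_mult_mass_le:
  assumes "h n = 0"
  shows "lambda_tadpole p n 3 * path_mass p n h \<le> tadpole_energy p n h"
proof (cases "\<exists>x\<in>{1..n}. h x \<noteq> 0")
  case True
  then show ?thesis
    using lambda_tadpole_le[OF assms True, of p] path_mass_pos[OF True, of p]
    by (simp add: pos_le_divide_eq)
next
  case False
  then have "path_mass p n h = 0"
    unfolding path_mass_def by (intro sum.neutral) auto
  then show ?thesis
    using tadpole_energy_nonneg[of p n h] by simp
qed

lemma lambda_tadpole_less_of_split:
  assumes "h1 n = 0" "h2 n = 0" "0 < A" "0 < B"
    and energy: "tadpole_energy p n h1 + tadpole_energy p n h2 \<le> A"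
    and mass: "B \<le> path_mass p n h1 + path_mass p n h2"
    and strict: "tadpole_energy p n h1 + tadpole_energy p n h2 < A \<or> B < path_mass p n h1 + path_mass p n h2"
  shows "lambda_tadpole p n 3 < A / B"
proof -
  let ?l = "lambda_tadpole p n 3"
  have split: "?l * (path_mass p n h1 + path_mass p n h2) \<le> tadpole_energy p n h1 + tadpole_energy p n h2"
    using lambda_tadpole_mult_mass_le[of h1 n p] lambda_tadpole_mult_mass_le[of h2 n p] assms(1,2)
    by (simp add: distrib_left)
  have "?l * B < A"
  proof (cases "?l \<le> 0")
    case True
    then have "?l * B \<le> 0"
      using assms(4) by (intro mult_nonpos_nonneg) auto
    then show ?thesis
      using assms(3) by linarith
  next
    case False
    then have "?l * B \<le> ?l * (path_mass p n h1 + path_mass p n h2)"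
      using mass by (intro mult_left_mono) auto
    moreover have "?l * B < ?l * (path_mass p n h1 + path_mass p n h2)"
      if "B < path_mass p n h1 + path_mass p n h2"
      using False that by (intro mult_strict_left_mono) auto
    ultimately show ?thesis
      using split energy strict by linarith
  qed
  then show ?thesis
    using assms(4) by (simp add: pos_less_divide_eq)
qed

definition plateau :: "nat \<Rightarrow> real \<Rightarrow> real \<Rightarrow> nat \<Rightarrow> real" where
  "plateau n c a k = (if k = n then 0 else if k = n - 1 then a else c)"

lemma tadpole_energy_plateau:
  assumes "5 \<le> n"
  shows "tadpole_energy p n (plateau n c a) = \<bar>c - a\<bar> powr p + \<bar>a\<bar> powr p"
proof -
  let ?h = "plateau n c a"
  have "(n - 3) + 3 = n" "Suc (n - 3) = n - 2"
    using assms by simp_all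
  then have "path_energy p n ?h = path_energy p (n - 2) ?h + path_energy p 3 (\<lambda>k. ?h (k + (n - 3)))"
    using path_energy_add[of 3 p "n - 3" ?h] by (simp only: one_le_numeral)
  also have "path_energy p (n - 2) ?h = path_energy p (n - 2) (\<lambda>_. c)"
    by (rule path_energy_cong) (auto simp: plateau_def)
  also have "\<dots> = 0"
    by (simp add: path_energy_def)
  also have "path_energy p 3 (\<lambda>k. ?h (k + (n - 3))) = \<bar>c - a\<bar> powr p + \<bar>a\<bar> powr p"
  proof -
    have "path_energy p 3 g = \<bar>g 1 - g 2\<bar> powr p + \<bar>g 2 - g 3\<bar> powr p" for g
      by (simp add: path_energy_def eval_nat_numeral)
    moreover have "1 + (n - 3) = n - 2" "2 + (n - 3) = n - 1" "3 + (n - 3) = n"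
      "n - 2 \<noteq> n" "n - 2 \<noteq> n - 1" "n - 1 \<noteq> n"
      using assms by simp_all
    ultimately show ?thesis
      by (simp add: plateau_def)
  qed
  finally have "path_energy p n ?h = \<bar>c - a\<bar> powr p + \<bar>a\<bar> powr p"
    by simp
  moreover have "?h 1 = c" "?h 3 = c"
    using assms by (auto simp: plateau_def)
  ultimately show ?thesis
    unfolding tadpole_energy_def by simp
qed

lemma path_mass_plateau:
  assumes "2 \<le> n"
  shows "path_mass p n (plateau n c a) = real (n - 2) * \<bar>c\<bar> powr p + \<bar>a\<bar> powr p"
proof -
  let ?h = "plateau n c a"
  have "(n - 2) + 2 = n"
    using assms by simp
  then have "path_mass p n ?h = path_mass p (n - 2) ?h + path_mass p 2 (\<lambda>k. ?h (k + (n - 2)))"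
    using path_mass_add[of p "n - 2" 2 ?h] by (simp only:)
  also have "path_mass p (n - 2) ?h = path_mass p (n - 2) (\<lambda>_. c)"
    by (rule path_mass_cong) (auto simp: plateau_def)
  also have "\<dots> = real (n - 2) * \<bar>c\<bar> powr p"
    by (simp add: path_mass_def)
  also have "path_mass p 2 (\<lambda>k. ?h (k + (n - 2))) = \<bar>a\<bar> powr p"
  proof -
    have "path_mass p 2 g = \<bar>g 1\<bar> powr p + \<bar>g 2\<bar> powr p" for g
      by (simp add: path_mass_def eval_nat_numeral)
    moreover have "1 + (n - 2) = n - 1" "2 + (n - 2) = n"
      using assms by simp_all
    ultimately show ?thesis
      using assms by (simp add: plateau_def)
  qed
  finally show ?thesis .
qed

lemma tadpole_energy_duplicate_vertex_1_twice:
  assumes "3 \<le> n"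
  shows "tadpole_energy p n (duplicate_vertex 1 (duplicate_vertex 1 g)) = path_energy p (n - 2) g"
proof -
  have "Suc (n - 2) = n - 1" "Suc (n - 1) = n"
    using assms by simp_all
  then have "path_energy p n (duplicate_vertex 1 (duplicate_vertex 1 g)) = path_energy p (n - 2) g"
    using path_energy_duplicate_vertex[of 1 "n - 1" p "duplicate_vertex 1 g"]
      path_energy_duplicate_vertex[of 1 "n - 2" p g] assms by simp
  then show ?thesis
    unfolding tadpole_energy_def by (simp add: duplicate_vertex_def)
qed

lemma path_mass_duplicate_vertex_1_twice:
  assumes "3 \<le> n"
  shows "path_mass p n (duplicate_vertex 1 (duplicate_vertex 1 g)) = path_mass p (n - 2) g + 2 * \<bar>g 1\<bar> powr p"
proof -
  have "Suc (n - 2) = n - 1" "Suc (n - 1) = n"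
    using assms by simp_all
  then show ?thesis
    using path_mass_duplicate_vertex[of 1 "n - 1" p "duplicate_vertex 1 g"]
      path_mass_duplicate_vertex[of 1 "n - 2" p g] assms by (simp add: duplicate_vertex_def)
qed

text \<open>The two pieces of \<open>f\<close>: its tail from vertex 4 on, padded by two copies of \<open>f 4\<close>
  so that it is constant on the cycle \<open>1, 2, 3\<close>, and a plateau carrying \<open>f 2\<close> next to the end
  vertex and \<open>f 3\<close> on the rest; if \<open>f 3 = f 4 = 0\<close> it carries \<open>f 2\<close> throughout instead, so
  that one of the two inequalities stays strict.\<close>

lemma lambda_tadpole_less_path_quotient:
  assumes "5 \<le> n" "f 1 = 0" "f 2 \<noteq> 0" "f (Suc n) = 0"
  shows "lambda_tadpole p n 3 < path_energy p (Suc n) f / path_mass p (Suc n) f"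
proof -
  define g where "g = (\<lambda>k. f (k + 3))"
  define tail where "tail = duplicate_vertex 1 (duplicate_vertex 1 g)"
  have "3 + (n - 2) = Suc n"
    using assms(1) by simp
  moreover have "path_energy p 4 f = \<bar>f 1 - f 2\<bar> powr p + \<bar>f 2 - f 3\<bar> powr p + \<bar>f 3 - f 4\<bar> powr p"
    "path_mass p 3 f = \<bar>f 1\<bar> powr p + \<bar>f 2\<bar> powr p + \<bar>f 3\<bar> powr p"
    by (simp_all add: path_energy_def path_mass_def eval_nat_numeral)
  ultimately have energy: "path_energy p (Suc n) f
      = \<bar>f 2\<bar> powr p + \<bar>f 2 - f 3\<bar> powr p + \<bar>f 3 - f 4\<bar> powr p + path_energy p (n - 2) g"
    and mass: "path_mass p (Suc n) f = \<bar>f 2\<bar> powr p + \<bar>f 3\<bar> powr p + path_mass p (n - 2) g"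
    using path_energy_add[of "n - 2" p 3 f] path_mass_add[of p 3 "n - 2" f] assms(1,2)
    by (simp_all add: g_def)
  have tail: "tadpole_energy p n tail = path_energy p (n - 2) g"
    "path_mass p n tail = path_mass p (n - 2) g + 2 * \<bar>f 4\<bar> powr p" "tail n = 0"
    using assms(1,4) tadpole_energy_duplicate_vertex_1_twice path_mass_duplicate_vertex_1_twice
    by (simp_all add: tail_def g_def duplicate_vertex_def)
  have plateau: "tadpole_energy p n (plateau n c a) = \<bar>c - a\<bar> powr p + \<bar>a\<bar> powr p"
    "path_mass p n (plateau n c a) = real (n - 2) * \<bar>c\<bar> powr p + \<bar>a\<bar> powr p" "plateau n c a n = 0" for c a
    using assms(1) tadpole_energy_plateau path_mass_plateau by (simp_all add: plateau_def)
  have "\<exists>x\<in>{1..Suc n}. f x \<noteq> 0"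
    using assms(1,3) by (intro bexI[of _ 2]) auto
  then have pos: "0 < path_energy p (Suc n) f" "0 < path_mass p (Suc n) f" "0 < \<bar>f 2\<bar> powr p"
    using path_energy_pos[of f "Suc n" p] path_mass_pos[of "Suc n" f p] assms(2,3) by auto
  show ?thesis
  proof (cases "f 3 = 0 \<and> f 4 = 0")
    case True
    show ?thesis
      by (rule lambda_tadpole_less_of_split[of "plateau n (f 2) (f 2)" n tail])
        (use tail plateau pos True in \<open>simp_all add: energy mass\<close>)
  next
    case False
    then have "0 < \<bar>f 3\<bar> powr p + \<bar>f 4\<bar> powr p"
      by (auto intro: add_pos_nonneg add_nonneg_pos)
    moreover have "3 * \<bar>f 3\<bar> powr p \<le> real (n - 2) * \<bar>f 3\<bar> powr p"
      using assms(1) by (intro mult_right_mono) auto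
    ultimately have mass_gain: "\<bar>f 3\<bar> powr p < real (n - 2) * \<bar>f 3\<bar> powr p + 2 * \<bar>f 4\<bar> powr p"
      by simp
    show ?thesis
      by (rule lambda_tadpole_less_of_split[of "plateau n (f 3) (f 2)" n tail])
        (use tail plateau pos mass_gain in \<open>simp_all add: energy mass abs_minus_commute\<close>)
  qed
qed

lemma powr_add_le_powr_add:
  fixes x y p :: real
  assumes "0 \<le> x" "0 \<le> y" "1 \<le> p"
  shows "x powr p + y powr p \<le> (x + y) powr p"
proof (cases "x = 0 \<or> y = 0")
  case False
  then have "0 < x" "0 < y"
    using assms by auto
  have split: "z powr p = z * z powr (p - 1)" if "0 < z" for z :: real
    using that by (simp add: powr_mult_base)
  have "x * x powr (p - 1) + y * y powr (p - 1) \<le> x * (x + y) powr (p - 1) + y * (x + y) powr (p - 1)"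
    using assms \<open>0 < x\<close> \<open>0 < y\<close> by (intro add_mono mult_left_mono powr_mono2) auto
  also have "\<dots> = (x + y) * (x + y) powr (p - 1)"
    by (simp add: algebra_simps)
  finally show ?thesis
    using split \<open>0 < x\<close> \<open>0 < y\<close> by simp
qed (use assms in auto)

lemma path_energy_5: "path_energy p 5 f =
    \<bar>f 1 - f 2\<bar> powr p + \<bar>f 2 - f 3\<bar> powr p + \<bar>f 3 - f 4\<bar> powr p + \<bar>f 4 - f 5\<bar> powr p"
  by (simp add: path_energy_def eval_nat_numeral)

lemma path_mass_5: "path_mass p 5 f =
    \<bar>f 1\<bar> powr p + \<bar>f 2\<bar> powr p + \<bar>f 3\<bar> powr p + \<bar>f 4\<bar> powr p + \<bar>f 5\<bar> powr p"
  by (simp add: path_mass_def eval_nat_numeral)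

lemma tadpole_energy_4_step:
  "tadpole_energy p 4 (\<lambda>k. if k \<le> 2 then u else if k = 3 then v else 0)
    = 2 * \<bar>u - v\<bar> powr p + \<bar>v\<bar> powr p"
  by (simp add: tadpole_energy_def path_energy_def eval_nat_numeral abs_minus_commute)

lemma path_mass_4_step:
  "path_mass p 4 (\<lambda>k. if k \<le> 2 then u else if k = 3 then v else 0) = 2 * \<bar>u\<bar> powr p + \<bar>v\<bar> powr p"
  by (simp add: path_mass_def eval_nat_numeral)

lemma lambda_tadpole4_less_peak_middle:
  assumes "0 < p" "0 \<le> a" "a \<le> b" "0 \<le> c" "c \<le> b" "0 < b"
  shows "lambda_tadpole p 4 3
    < (a powr p + \<bar>a - b\<bar> powr p + \<bar>b - c\<bar> powr p + c powr p) / (a powr p + b powr p + c powr p)"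
    (is "_ < ?E / ?M")
proof -
  define step where "step u v = (\<lambda>k::nat. if k \<le> 2 then u else if k = 3 then v else 0)" for u v :: real
  have "a powr p \<le> b powr p" "c powr p \<le> b powr p" "0 < b powr p"
    using assms by (auto intro: powr_mono2)
  have "0 < a powr p + \<bar>a - b\<bar> powr p"
    using assms by (cases "a = 0") (auto simp: add_pos_nonneg)
  then have pos: "0 < 2 * ?E" "0 < 2 * ?M"
    using \<open>0 < b powr p\<close> powr_ge_zero[of a p] powr_ge_zero[of c p] powr_ge_zero[of "\<bar>b - c\<bar>" p]
    by (smt (verit))+
  have energy: "tadpole_energy p 4 (step b a) + tadpole_energy p 4 (step b c) = 2 * ?E - (a powr p + c powr p)"
    using assms by (simp add: step_def tadpole_energy_4_step abs_minus_commute)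
  have mass: "path_mass p 4 (step b a) + path_mass p 4 (step b c) = 2 * ?M + (2 * b powr p - a powr p - c powr p)"
    using assms by (simp add: step_def path_mass_4_step)
  have "a = 0 \<and> c = 0 \<or> 0 < a powr p + c powr p"
    using assms(2,4) by (auto intro: add_pos_nonneg add_nonneg_pos)
  then have strict: "0 < a powr p + c powr p \<or> 0 < 2 * b powr p - a powr p - c powr p"
    using \<open>0 < b powr p\<close> by auto
  have "lambda_tadpole p 4 3 < (2 * ?E) / (2 * ?M)"
  proof (rule lambda_tadpole_less_of_split[of "step b a" 4 "step b c" "2 * ?E" "2 * ?M" p])
    show "tadpole_energy p 4 (step b a) + tadpole_energy p 4 (step b c) \<le> 2 * ?E"
      unfolding energy using powr_ge_zero[of a p] powr_ge_zero[of c p] by linarith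
    show "2 * ?M \<le> path_mass p 4 (step b a) + path_mass p 4 (step b c)"
      unfolding mass using \<open>a powr p \<le> b powr p\<close> \<open>c powr p \<le> b powr p\<close> by linarith
    show "tadpole_energy p 4 (step b a) + tadpole_energy p 4 (step b c) < 2 * ?E \<or>
        2 * ?M < path_mass p 4 (step b a) + path_mass p 4 (step b c)"
      unfolding energy mass using strict by linarith
  qed (use pos in \<open>simp_all add: step_def\<close>)
  also have "(2 * ?E) / (2 * ?M) = ?E / ?M"
    by (rule mult_divide_mult_cancel_left) simp
  finally show ?thesis .
qed

lemma lambda_tadpole4_less_peak_end:
  assumes "1 \<le> p" "0 \<le> b" "b \<le> a" "0 \<le> c" "c \<le> a" "0 < a"
  shows "lambda_tadpole p 4 3
    < (a powr p + \<bar>a - b\<bar> powr p + \<bar>b - c\<bar> powr p + c powr p) / (a powr p + b powr p + c powr p)"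
    (is "_ < ?E / ?M")
proof -
  let ?h = "\<lambda>k::nat. if k \<le> 2 then a else if k = 3 then b else 0"
  have "\<bar>a - b\<bar> powr p + b powr p \<le> a powr p"
    using powr_add_le_powr_add[of "a - b" b p] assms by simp
  have "c powr p \<le> a powr p" "0 < a powr p"
    using assms by (auto intro: powr_mono2)
  then have pos: "0 < ?E" "0 < ?M"
    using powr_ge_zero[of b p] powr_ge_zero[of c p] powr_ge_zero[of "\<bar>a - b\<bar>" p]
      powr_ge_zero[of "\<bar>b - c\<bar>" p]
    by linarith+
  have "tadpole_energy p 4 (\<lambda>_. 0) = 0" "path_mass p 4 (\<lambda>_. 0) = 0"
    by (simp_all add: tadpole_energy_def path_energy_def path_mass_def)
  then have energy: "tadpole_energy p 4 ?h + tadpole_energy p 4 (\<lambda>_. 0) = 2 * \<bar>a - b\<bar> powr p + b powr p"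
    and mass: "path_mass p 4 ?h + path_mass p 4 (\<lambda>_. 0) = 2 * a powr p + b powr p"
    using assms by (simp_all add: tadpole_energy_4_step path_mass_4_step)
  have strict: "2 * \<bar>a - b\<bar> powr p + b powr p < ?E \<or> ?M < 2 * a powr p + b powr p"
  proof (cases "c = 0")
    case True
    then show ?thesis
      using \<open>0 < a powr p\<close> by simp
  next
    case False
    then have "0 < c powr p"
      by simp
    then show ?thesis
      using \<open>\<bar>a - b\<bar> powr p + b powr p \<le> a powr p\<close> powr_ge_zero[of "\<bar>b - c\<bar>" p] by linarith
  qed
  show ?thesis
  proof (rule lambda_tadpole_less_of_split[of ?h 4 "\<lambda>_. 0" ?E ?M p])
    show "tadpole_energy p 4 ?h + tadpole_energy p 4 (\<lambda>_. 0) \<le> ?E"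
      unfolding energy using \<open>\<bar>a - b\<bar> powr p + b powr p \<le> a powr p\<close>
        powr_ge_zero[of c p] powr_ge_zero[of "\<bar>b - c\<bar>" p] by linarith
    show "?M \<le> path_mass p 4 ?h + path_mass p 4 (\<lambda>_. 0)"
      unfolding mass using \<open>c powr p \<le> a powr p\<close> by linarith
    show "tadpole_energy p 4 ?h + tadpole_energy p 4 (\<lambda>_. 0) < ?E \<or>
        ?M < path_mass p 4 ?h + path_mass p 4 (\<lambda>_. 0)"
      unfolding energy mass by (rule strict)
  qed (use pos in simp_all)
qed

lemma lambda_tadpole4_less:
  assumes "1 < p" "0 \<le> a" "0 \<le> b" "0 \<le> c" "a \<noteq> 0 \<or> b \<noteq> 0 \<or> c \<noteq> 0"
  shows "lambda_tadpole p 4 3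
    < (a powr p + \<bar>a - b\<bar> powr p + \<bar>b - c\<bar> powr p + c powr p) / (a powr p + b powr p + c powr p)"
proof -
  consider "a \<le> b" "c \<le> b" | "b \<le> a" "c \<le> a" | "a \<le> c" "b \<le> c"
    by linarith
  then show ?thesis
  proof cases
    case 1
    then show ?thesis
      using assms by (intro lambda_tadpole4_less_peak_middle) auto
  next
    case 2
    then show ?thesis
      using assms by (intro lambda_tadpole4_less_peak_end) auto
  next
    case 3
    then have "lambda_tadpole p 4 3
        < (c powr p + \<bar>c - b\<bar> powr p + \<bar>b - a\<bar> powr p + a powr p) / (c powr p + b powr p + a powr p)"
      using assms by (intro lambda_tadpole4_less_peak_end) auto
    then show ?thesis
      by (simp add: abs_minus_commute ac_simps)
  qed
qed

theorem lambda_tadpole_less_lambda_path_Suc: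
  assumes "4 \<le> n" "1 < p"
  shows "lambda_tadpole p n 3 < lambda_path p (Suc n)"
proof -
  obtain f where f: "\<forall>x. 0 \<le> f x" "f 1 = 0" "f (Suc n) = 0" "\<exists>x\<in>{1..Suc n}. f x \<noteq> 0"
    "lambda_path p (Suc n) = path_energy p (Suc n) f / path_mass p (Suc n) f"
    by (rule lambda_path_attained[of "Suc n" p]) (use assms in auto)
  show ?thesis
  proof (cases "n = 4")
    case True
    obtain x where "x \<in> {1..5}" "f x \<noteq> 0"
      using f(4) True by auto
    then have "f 2 \<noteq> 0 \<or> f 3 \<noteq> 0 \<or> f 4 \<noteq> 0"
      using f(2,3) True by (auto simp: eval_nat_numeral le_Suc_eq)
    then show ?thesis
      using lambda_tadpole4_less[of p "f 2" "f 3" "f 4"] f True assms(2)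
      by (simp add: path_energy_5 path_mass_5)
  next
    case False
    have "f 2 \<noteq> 0"
      using lambda_path_minimizer_nonzero_2[of n p f] f assms by simp
    then show ?thesis
      using lambda_tadpole_less_path_quotient[of n f p] f assms False by simp
  qed
qed

theorem lemma2p4:
  fixes n :: nat and p :: real
  assumes "n \<ge> 4" and "p > 1"
  shows "lambda_path p n > lambda_path p (n + 1) \<and>
         lambda_path p (n + 1) > lambda_tadpole p n 3"
  using lambda_path_Suc_less[of n p] lambda_tadpole_less_lambda_path_Suc[of n p] assms by simp

end
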